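(* Let $\theta>1$, $r\in(\theta^{-1},\theta^{-1/2}]$ and $s=\max\big(1,\frac{\ln\theta}{\ln(r\theta)}-2\big)$. Let $(P_1,\dots,P_n)$ be a random price sequence with values in $[1,\theta]$, $P^*=\max_iP_i$, and let $Y$ be a random prediction with values in $[1,\theta]$, with arbitrary joint distribution. Then \[ \frac{\mathbb{E}[\mathsf{A}^1_r(P,Y)]}{\mathbb{E}[P^*]}\ \ge\ \max\Big\{r,\ \frac{1}{r\theta}\,\frac{\mathbb{E}[P^*\,\mathcal{E}(P^*,Y)^{s}]}{\mathbb{E}[P^*]}\Big\}. \]
   Context: One-max search: fix $\theta>1$. Prices $p_1,\dots,p_n\in[1,\theta]$ are revealed one at a time; the algorithm receives at the start a prediction $y\in[1,\theta]$ of the maximum price. At each step it irrevocably accepts the current price (payoff = that price) or rejects it; if nothing is accepted the payoff is $1$. Let $\varphi_r(z)=\frac{r\theta-1}{1-r}+\frac{1-r^2\theta}{1-r}\cdot\frac{z}{r\theta}$ and $\Phi^1_r(z)=\max(r\theta,\varphi_r(z))$; $\mathsf{A}^1_r$ accepts the first price $p_i\ge\Phi^1_r(y)$, and $\mathsf{A}^1_r(P,Y)$ denotes its (random) payoff run on the realized prices and prediction. $\mathcal{E}(a,b)=\min\{a/b,b/a\}$. *)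

theory Defs
  imports "HOL-Probability.Probability"
begin

definition phi_r :: "real \<Rightarrow> real \<Rightarrow> real \<Rightarrow> real" where
  "phi_r \<theta> r z = (r * \<theta> - 1) / (1 - r) + (1 - r^2 * \<theta>) / (1 - r) * (z / (r * \<theta>))"

definition Phi1 :: "real \<Rightarrow> real \<Rightarrow> real \<Rightarrow> real" where
  "Phi1 \<theta> r z = max (r * \<theta>) (phi_r \<theta> r z)"

definition A1 :: "real \<Rightarrow> real \<Rightarrow> real list \<Rightarrow> real \<Rightarrow> real" where
  "A1 \<theta> r ps y = (case find (\<lambda>p. p \<ge> Phi1 \<theta> r y) ps of None \<Rightarrow> 1 | Some p \<Rightarrow> p)"

definition consist :: "real \<Rightarrow> real \<Rightarrow> real" where
  "consist a b = min (a / b) (b / a)"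

end

(* With m the largest price and y the prediction, the payoff is pointwise at least r m and at
   least m E(m,y)^s / (r \<theta>); taking expectations gives both bounds.  The map phi_r is the
   affine function through (r \<theta>, r \<theta>) and (\<theta>, 1/r).  If a price is accepted it is at least
   phi_r y \<ge> y / (r \<theta>) \<ge> m E(m,y)^s / (r \<theta>).  If every price is rejected although m > r \<theta>,
   then r \<theta> < m < phi_r y \<le> y, and concavity of z \<mapsto> z^(s/(1+s)) gives
   phi_r y \<le> (r \<theta>)^(1/(1+s)) y^(s/(1+s)) (at y = \<theta> this is exactly ln \<theta> \<le> (2+s) ln (r \<theta>)),
   whence m (m/y)^s \<le> r \<theta>. *)

theory Submission
  imports Defs
begin

lemma powr_concave:
  assumes "0 \<le> p" "p \<le> 1"
  shows "concave_on {0<..} (\<lambda>x::real. x powr p)"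
proof (rule f''_le0_imp_concave)
  fix x :: real assume "x \<in> {0<..}"
  then have x: "0 < x" by simp
  show "((\<lambda>x. x powr p) has_real_derivative p * x powr (p - 1)) (at x)"
    using x by (rule has_real_derivative_powr)
  show "((\<lambda>x. p * x powr (p - 1)) has_real_derivative p * ((p - 1) * x powr (p - 1 - 1))) (at x)"
    using x by (intro DERIV_cmult has_real_derivative_powr)
  show "p * ((p - 1) * x powr (p - 1 - 1)) \<le> 0"
    using assms by (intro mult_nonneg_nonpos mult_nonpos_nonneg) auto
qed simp

lemma phi_r_affine:
  assumes "\<theta> \<noteq> 0" "r \<noteq> 0" "r \<noteq> 1"
  shows "phi_r \<theta> r ((1 - t) * (r * \<theta>) + t * \<theta>) = (1 - t) * (r * \<theta>) + t / r"
proof -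
  have "((1 - t) * (r * \<theta>) + t * \<theta>) / (r * \<theta>) = 1 - t + t / r"
    using assms by (simp add: field_simps)
  moreover have "(r * \<theta> - 1) / (1 - r) + (1 - r\<^sup>2 * \<theta>) / (1 - r) * (1 - t + t / r)
      = (1 - t) * (r * \<theta>) + t / r"
  proof -
    have "r * \<theta> - 1 + (1 - r\<^sup>2 * \<theta>) * (1 - t + t / r) = (1 - r) * ((1 - t) * (r * \<theta>) + t / r)"
      using assms(2) by (simp add: field_simps power2_eq_square)
    then show ?thesis
      using assms(3) by (simp add: add_divide_distrib[symmetric])
  qed
  ultimately show ?thesis
    unfolding phi_r_def by simp
qed

lemma consist_eq_left:
  assumes "0 < b" "b \<le> a"
  shows "consist a b = b / a"
proof -
  have "b / a \<le> 1" "1 \<le> a / b" using assms by auto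
  then show ?thesis unfolding consist_def by (simp add: min_def)
qed

lemma consist_eq_right: "0 < a \<Longrightarrow> a \<le> b \<Longrightarrow> consist a b = a / b"
  using consist_eq_left[of a b] by (simp add: consist_def min.commute)

lemma consist_pos: "0 < a \<Longrightarrow> 0 < b \<Longrightarrow> 0 < consist a b"
  unfolding consist_def by simp

lemma consist_le_1: "0 < a \<Longrightarrow> 0 < b \<Longrightarrow> consist a b \<le> 1"
  by (cases "a \<le> b") (simp_all add: consist_eq_left consist_eq_right)

lemma mult_consist_powr_le:
  fixes a b s :: real
  assumes "0 < a" "0 < b" "1 \<le> s"
  shows "a * consist a b powr s \<le> min a b"
proof -
  have "consist a b powr s \<le> consist a b"
    using assms by (intro powr_le_one_le consist_pos consist_le_1) auto
  then have "a * consist a b powr s \<le> a * consist a b"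
    using assms(1) by (intro mult_left_mono) auto
  also have "a * consist a b \<le> min a b"
  proof (cases "a \<le> b")
    case True
    then have "a * consist a b = a * (a / b)" using assms by (simp add: consist_eq_right)
    also have "\<dots> \<le> a" using True assms by (intro mult_left_le) auto
    finally show ?thesis using True by simp
  qed (use assms in \<open>simp add: consist_eq_left\<close>)
  finally show ?thesis .
qed

lemma A1_Nil [simp]: "A1 \<theta> r [] y = 1"
  by (simp add: A1_def)

lemma A1_Cons: "A1 \<theta> r (p # ps) y = (if Phi1 \<theta> r y \<le> p then p else A1 \<theta> r ps y)"
  by (simp add: A1_def)

lemma A1_cases:
  obtains (reject) "A1 \<theta> r ps y = 1" "\<forall>p\<in>set ps. p < Phi1 \<theta> r y"
    | (accept) "A1 \<theta> r ps y \<in> set ps" "Phi1 \<theta> r y \<le> A1 \<theta> r ps y"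
proof -
  have "(A1 \<theta> r ps y = 1 \<and> (\<forall>p\<in>set ps. p < Phi1 \<theta> r y))
      \<or> (A1 \<theta> r ps y \<in> set ps \<and> Phi1 \<theta> r y \<le> A1 \<theta> r ps y)"
    by (induction ps) (auto simp: A1_Cons)
  then show thesis using that by blast
qed

lemma borel_measurable_A1:
  assumes "\<And>i. i \<in> set xs \<Longrightarrow> (\<lambda>\<omega>. P \<omega> i) \<in> borel_measurable M"
    and "Y \<in> borel_measurable M"
  shows "(\<lambda>\<omega>. A1 \<theta> r (map (P \<omega>) xs) (Y \<omega>)) \<in> borel_measurable M"
  using assms(1)
proof (induction xs)
  case (Cons i xs)
  have unfold: "(\<lambda>\<omega>. A1 \<theta> r (map (P \<omega>) (i # xs)) (Y \<omega>))
      = (\<lambda>\<omega>. if Phi1 \<theta> r (Y \<omega>) \<le> P \<omega> i then P \<omega> i else A1 \<theta> r (map (P \<omega>) xs) (Y \<omega>))"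
    by (simp add: A1_Cons)
  have P_i: "(\<lambda>\<omega>. P \<omega> i) \<in> borel_measurable M" using Cons.prems by simp
  have tail: "(\<lambda>\<omega>. A1 \<theta> r (map (P \<omega>) xs) (Y \<omega>)) \<in> borel_measurable M" using Cons by simp
  have "{\<omega> \<in> space M. Phi1 \<theta> r (Y \<omega>) \<le> P \<omega> i} \<in> sets M"
    unfolding Phi1_def phi_r_def using P_i assms(2) by measurable
  then show ?case
    unfolding unfold by (rule measurable_If[OF P_i tail])
qed (unfold list.map A1_Nil, measurable)

lemma integral_ratio_mono:
  fixes f g h :: "'a \<Rightarrow> real"
  assumes "integrable M f" "integrable M g" "\<And>\<omega>. \<omega> \<in> space M \<Longrightarrow> c * f \<omega> \<le> g \<omega>"
    and "0 < (\<integral>\<omega>. h \<omega> \<partial>M)"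
  shows "c * ((\<integral>\<omega>. f \<omega> \<partial>M) / (\<integral>\<omega>. h \<omega> \<partial>M)) \<le> (\<integral>\<omega>. g \<omega> \<partial>M) / (\<integral>\<omega>. h \<omega> \<partial>M)"
proof -
  have "(\<integral>\<omega>. c * f \<omega> \<partial>M) \<le> (\<integral>\<omega>. g \<omega> \<partial>M)"
    using assms(1-3) by (intro integral_mono) auto
  then have "c * (\<integral>\<omega>. f \<omega> \<partial>M) / (\<integral>\<omega>. h \<omega> \<partial>M) \<le> (\<integral>\<omega>. g \<omega> \<partial>M) / (\<integral>\<omega>. h \<omega> \<partial>M)"
    using assms(4) by (intro divide_right_mono) auto
  then show ?thesis by simp
qed

locale one_max_params =
  fixes \<theta> r :: real
  assumes theta_gt_1: "1 < \<theta>" and r_gt: "1 / \<theta> < r" and r_le: "r \<le> 1 / sqrt \<theta>"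
begin

lemma r_pos: "0 < r"
proof -
  have "0 < 1 / \<theta>" using theta_gt_1 by simp
  then show ?thesis using r_gt by linarith
qed

lemma r_lt_1: "r < 1"
proof -
  have "1 / sqrt \<theta> < 1" using theta_gt_1 by simp
  then show ?thesis using r_le by linarith
qed

lemma r_theta_gt_1: "1 < r * \<theta>"
  using theta_gt_1 r_gt by (simp add: field_simps)

lemma r_theta_le_inv_r: "r * \<theta> \<le> 1 / r"
proof -
  have "r * sqrt \<theta> \<le> 1" using r_le theta_gt_1 by (simp add: field_simps)
  then have "(r * sqrt \<theta>)\<^sup>2 \<le> 1" using r_pos theta_gt_1 by (intro power_le_one) auto
  then show ?thesis using r_pos theta_gt_1 by (simp add: field_simps power2_eq_square power_mult_distrib)
qed

lemma inv_r_lt_theta: "1 / r < \<theta>"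
  using theta_gt_1 r_gt r_pos by (simp add: field_simps)

lemma phi_r_param:
  obtains t where "y = (1 - t) * (r * \<theta>) + t * \<theta>" "phi_r \<theta> r y = (1 - t) * (r * \<theta>) + t / r"
proof
  define t where "t = (y - r * \<theta>) / (\<theta> - r * \<theta>)"
  have "\<theta> - r * \<theta> \<noteq> 0" using r_lt_1 theta_gt_1 by simp
  then have "t * (\<theta> - r * \<theta>) = y - r * \<theta>" unfolding t_def by simp
  then show y: "y = (1 - t) * (r * \<theta>) + t * \<theta>" by (simp add: algebra_simps)
  show "phi_r \<theta> r y = (1 - t) * (r * \<theta>) + t / r"
    using phi_r_affine[of \<theta> r t] theta_gt_1 r_pos r_lt_1 by (subst y) simp
qed

lemma phi_r_le_inv_r:
  assumes "y \<le> \<theta>"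
  shows "phi_r \<theta> r y \<le> 1 / r"
proof -
  obtain t where y: "y = (1 - t) * (r * \<theta>) + t * \<theta>" and phi: "phi_r \<theta> r y = (1 - t) * (r * \<theta>) + t / r"
    by (rule phi_r_param)
  have "0 \<le> (1 - t) * (\<theta> - r * \<theta>)" using assms y by (simp add: algebra_simps)
  then have "0 \<le> 1 - t" using r_lt_1 theta_gt_1 by (simp add: zero_le_mult_iff)
  then have "(1 - t) * (r * \<theta>) \<le> (1 - t) * (1 / r)" by (intro mult_left_mono r_theta_le_inv_r)
  moreover have "(1 - t) * (1 / r) + t / r = 1 / r" using r_pos by (simp add: field_simps)
  ultimately show ?thesis using phi by linarith
qed

lemma phi_r_ge:
  assumes "y \<le> \<theta>"
  shows "y / (r * \<theta>) \<le> phi_r \<theta> r y"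
proof -
  obtain t where y: "y = (1 - t) * (r * \<theta>) + t * \<theta>" and phi: "phi_r \<theta> r y = (1 - t) * (r * \<theta>) + t / r"
    by (rule phi_r_param)
  have "0 \<le> (1 - t) * (\<theta> - r * \<theta>)" using assms y by (simp add: algebra_simps)
  then have "0 \<le> 1 - t" using r_lt_1 theta_gt_1 by (simp add: zero_le_mult_iff)
  then have "0 \<le> (1 - t) * (r * \<theta> - 1)" using r_theta_gt_1 by simp
  moreover have "y / (r * \<theta>) = 1 - t + t / r" using y r_pos theta_gt_1 by (simp add: field_simps)
  ultimately show ?thesis using phi by (simp add: algebra_simps)
qed

lemma gt_r_theta_if_phi_r_gt:
  assumes "r * \<theta> < phi_r \<theta> r y"
  shows "r * \<theta> < y"
proof -
  obtain t where y: "y = (1 - t) * (r * \<theta>) + t * \<theta>" and phi: "phi_r \<theta> r y = (1 - t) * (r * \<theta>) + t / r"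
    by (rule phi_r_param)
  have "0 < t * (1 / r - r * \<theta>)" using assms phi by (simp add: algebra_simps)
  then have "0 < t" using r_theta_le_inv_r by (simp add: zero_less_mult_iff)
  then have "0 < t * (\<theta> - r * \<theta>)" using r_lt_1 theta_gt_1 by simp
  then show ?thesis using y by (simp add: algebra_simps)
qed

lemma phi_r_le_self:
  assumes "r * \<theta> \<le> y"
  shows "phi_r \<theta> r y \<le> y"
proof -
  obtain t where y: "y = (1 - t) * (r * \<theta>) + t * \<theta>" and phi: "phi_r \<theta> r y = (1 - t) * (r * \<theta>) + t / r"
    by (rule phi_r_param)
  have "0 \<le> t * (\<theta> - r * \<theta>)" using assms y by (simp add: algebra_simps)
  then have "0 \<le> t" using r_lt_1 theta_gt_1 by (simp add: zero_le_mult_iff)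
  then have "t / r \<le> t * \<theta>" using inv_r_lt_theta mult_left_mono[of "1 / r" \<theta> t] by simp
  then show ?thesis using y phi by simp
qed

lemma Phi1_le_inv_r: "y \<le> \<theta> \<Longrightarrow> Phi1 \<theta> r y \<le> 1 / r"
  unfolding Phi1_def using phi_r_le_inv_r r_theta_le_inv_r by simp

lemma inv_r_le_weighted_geometric_mean:
  assumes "0 \<le> s" "ln \<theta> \<le> (2 + s) * ln (r * \<theta>)"
  shows "1 / r \<le> (r * \<theta>) powr (1 / (1 + s)) * \<theta> powr (s / (1 + s))"
proof -
  have "ln (1 / r) = ln \<theta> - ln (r * \<theta>)"
    using r_pos theta_gt_1 by (simp add: ln_div ln_mult)
  also have "\<dots> \<le> (ln (r * \<theta>) + s * ln \<theta>) / (1 + s)"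
  proof -
    have "(ln \<theta> - ln (r * \<theta>)) * (1 + s) \<le> ln (r * \<theta>) + s * ln \<theta>"
      using assms(2) by (simp add: algebra_simps)
    then show ?thesis using assms(1) by (simp add: pos_le_divide_eq)
  qed
  also have "\<dots> = ln ((r * \<theta>) powr (1 / (1 + s)) * \<theta> powr (s / (1 + s)))"
    using r_pos r_theta_gt_1 theta_gt_1 by (simp add: ln_mult ln_powr add_divide_distrib)
  finally show ?thesis
    using r_pos r_theta_gt_1 theta_gt_1 by (subst (asm) ln_le_cancel_iff) auto
qed

lemma phi_r_le_weighted_geometric_mean:
  assumes "0 \<le> s" "ln \<theta> \<le> (2 + s) * ln (r * \<theta>)" "r * \<theta> \<le> y" "y \<le> \<theta>"
  shows "phi_r \<theta> r y \<le> (r * \<theta>) powr (1 / (1 + s)) * y powr (s / (1 + s))"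
proof -
  define k l where "k = r * \<theta>" and "l = s / (1 + s)"
  have k: "1 < k" using r_theta_gt_1 unfolding k_def .
  have l: "0 \<le> l" "l \<le> 1" "1 - l = 1 / (1 + s)" using assms(1) unfolding l_def by (auto simp: field_simps)
  obtain t where y: "y = (1 - t) * k + t * \<theta>" and phi: "phi_r \<theta> r y = (1 - t) * k + t / r"
    unfolding k_def by (rule phi_r_param)
  have "0 \<le> t * (\<theta> - k)" "0 \<le> (1 - t) * (\<theta> - k)"
    using assms(3,4) y unfolding k_def by (simp_all add: algebra_simps)
  moreover have "k < \<theta>" using r_lt_1 theta_gt_1 unfolding k_def by simp
  ultimately have t: "0 \<le> t" "t \<le> 1" by (simp_all add: zero_le_mult_iff)
  have "(1 - t) * k powr l + t * \<theta> powr l \<le> y powr l"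
    using concave_onD[OF powr_concave[OF l(1,2)] t, of k \<theta>] k theta_gt_1 y by simp
  then have "k powr (1 - l) * ((1 - t) * k powr l + t * \<theta> powr l) \<le> k powr (1 - l) * y powr l"
    by (intro mult_left_mono) auto
  moreover have "k powr (1 - l) * ((1 - t) * k powr l + t * \<theta> powr l)
      = (1 - t) * k + t * (k powr (1 - l) * \<theta> powr l)"
    using k by (simp add: algebra_simps flip: powr_add)
  moreover have "t / r \<le> t * (k powr (1 - l) * \<theta> powr l)"
    using mult_left_mono[OF inv_r_le_weighted_geometric_mean[OF assms(1,2)] t(1)]
    by (simp only: l(3)) (simp add: k_def l_def)
  ultimately have "phi_r \<theta> r y \<le> k powr (1 - l) * y powr l" using phi by linarith
  then show ?thesis by (simp only: l(3)) (simp add: k_def l_def)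
qed

lemma mult_ratio_powr_le_if_le_phi_r:
  assumes "0 \<le> s" "ln \<theta> \<le> (2 + s) * ln (r * \<theta>)" "r * \<theta> \<le> y" "y \<le> \<theta>"
    and "0 < u" "u \<le> phi_r \<theta> r y"
  shows "u * (u / y) powr s \<le> r * \<theta>"
proof -
  have y: "0 < y" using assms(3) r_theta_gt_1 by simp
  have "u powr (1 + s) \<le> ((r * \<theta>) powr (1 / (1 + s)) * y powr (s / (1 + s))) powr (1 + s)"
    using assms(1,5,6) phi_r_le_weighted_geometric_mean[OF assms(1-4)] by (intro powr_mono2) auto
  also have "\<dots> = r * \<theta> * y powr s"
    using assms(1) r_pos theta_gt_1 y by (simp add: powr_mult powr_powr)
  finally show ?thesis
    using assms(5) y by (simp add: powr_divide powr_add divide_le_eq)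
qed

lemma r_Max_le_A1:
  assumes "ps \<noteq> []" "\<forall>p\<in>set ps. p \<le> \<theta>" "y \<le> \<theta>"
  shows "r * Max (set ps) \<le> A1 \<theta> r ps y"
proof (cases rule: A1_cases[of \<theta> r ps y])
  case reject
  then have "Max (set ps) < Phi1 \<theta> r y" using assms(1) by simp
  also have "\<dots> \<le> 1 / r" using assms(3) by (rule Phi1_le_inv_r)
  finally show ?thesis using reject(1) r_pos by (simp add: field_simps)
next
  case accept
  have "r * Max (set ps) \<le> r * \<theta>" using assms r_pos by simp
  then show ?thesis using accept(2) unfolding Phi1_def by linarith
qed

lemma consistency_bound_le_A1:
  assumes "1 \<le> s" "ln \<theta> \<le> (2 + s) * ln (r * \<theta>)"
    and "ps \<noteq> []" "\<forall>p\<in>set ps. 0 < p \<and> p \<le> \<theta>" "0 < y" "y \<le> \<theta>"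
  shows "1 / (r * \<theta>) * (Max (set ps) * consist (Max (set ps)) y powr s) \<le> A1 \<theta> r ps y"
proof -
  define m where "m = Max (set ps)"
  have "m \<in> set ps" unfolding m_def using assms(3) by simp
  then have m: "0 < m" "m \<le> \<theta>" using assms(4) by auto
  have bound: "m * consist m y powr s \<le> min m y"
    using m assms(1,5) by (intro mult_consist_powr_le)
  have "m * consist m y powr s \<le> A1 \<theta> r ps y * (r * \<theta>)"
  proof (cases rule: A1_cases[of \<theta> r ps y])
    case reject
    then have below: "m < Phi1 \<theta> r y" using assms(3) unfolding m_def by simp
    show ?thesis
    proof (cases "m \<le> r * \<theta>")
      case True
      then show ?thesis using bound reject(1) by simp
    next
      case False
      then have phi: "m < phi_r \<theta> r y" "r * \<theta> < phi_r \<theta> r y"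
        using below unfolding Phi1_def by auto
      then have "r * \<theta> < y" using gt_r_theta_if_phi_r_gt by blast
      then have "m \<le> y" using phi(1) phi_r_le_self[of y] by linarith
      then have "m * consist m y powr s = m * (m / y) powr s" using m by (simp add: consist_eq_right)
      also have "\<dots> \<le> r * \<theta>"
        using assms(1,2,6) \<open>r * \<theta> < y\<close> m phi by (intro mult_ratio_powr_le_if_le_phi_r) auto
      finally show ?thesis using reject(1) by simp
    qed
  next
    case accept
    have "m * consist m y powr s \<le> y" using bound by simp
    also have "\<dots> \<le> phi_r \<theta> r y * (r * \<theta>)"
      using phi_r_ge[OF assms(6)] r_theta_gt_1 by (simp add: pos_divide_le_eq)
    also have "\<dots> \<le> A1 \<theta> r ps y * (r * \<theta>)"
      using accept(2) r_theta_gt_1 unfolding Phi1_def by (intro mult_right_mono) auto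
    finally show ?thesis .
  qed
  then show ?thesis using r_theta_gt_1 unfolding m_def by (simp add: pos_divide_le_eq)
qed

end

theorem lemma1:
  fixes M :: "'w measure" and P :: "'w \<Rightarrow> nat \<Rightarrow> real" and Y :: "'w \<Rightarrow> real"
    and \<theta> r s :: real and n :: nat
  assumes "prob_space M"
    and "\<theta> > 1" and "1 / \<theta> < r" and "r \<le> 1 / sqrt \<theta>"
    and "s = max 1 (ln \<theta> / ln (r * \<theta>) - 2)"
    and "n \<ge> 1"
    and "\<And>i. i < n \<Longrightarrow> (\<lambda>\<omega>. P \<omega> i) \<in> borel_measurable M"
    and "\<And>i \<omega>. i < n \<Longrightarrow> \<omega> \<in> space M \<Longrightarrow> P \<omega> i \<in> {1..\<theta>}"
    and "Y \<in> borel_measurable M"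
    and "\<And>\<omega>. \<omega> \<in> space M \<Longrightarrow> Y \<omega> \<in> {1..\<theta>}"
  shows "(\<integral>\<omega>. A1 \<theta> r (map (P \<omega>) [0..<n]) (Y \<omega>) \<partial>M) / (\<integral>\<omega>. Max (P \<omega> ` {..<n}) \<partial>M)
         \<ge> max r (1 / (r * \<theta>) *
              ((\<integral>\<omega>. Max (P \<omega> ` {..<n}) * consist (Max (P \<omega> ` {..<n})) (Y \<omega>) powr s \<partial>M)
               / (\<integral>\<omega>. Max (P \<omega> ` {..<n}) \<partial>M)))"
proof -
  interpret prob_space M by fact
  interpret one_max_params \<theta> r using assms(2-4) by unfold_locales
  define ps where "ps \<omega> = map (P \<omega>) [0..<n]" for \<omega>
  define X where "X \<omega> = Max (set (ps \<omega>))" for \<omega>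
  define C where "C \<omega> = X \<omega> * consist (X \<omega>) (Y \<omega>) powr s" for \<omega>
  have set_ps: "set (ps \<omega>) = P \<omega> ` {..<n}" "ps \<omega> \<noteq> []" for \<omega>
    unfolding ps_def using assms(6) by (auto simp: atLeast0LessThan)
  have "ln \<theta> / ln (r * \<theta>) \<le> 2 + s" "0 < ln (r * \<theta>)"
    using assms(5) r_theta_gt_1 by auto
  then have s: "1 \<le> s" "ln \<theta> \<le> (2 + s) * ln (r * \<theta>)"
    using assms(5) by (auto simp: divide_le_eq)
  have prices: "\<forall>p\<in>set (ps \<omega>). 1 \<le> p \<and> p \<le> \<theta>" if "\<omega> \<in> space M" for \<omega>
    using assms(8) that unfolding set_ps by auto
  have X: "1 \<le> X \<omega> \<and> X \<omega> \<le> \<theta>" if "\<omega> \<in> space M" for \<omega>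
    using prices[OF that] Max_in[of "set (ps \<omega>)"] set_ps(2) unfolding X_def by auto
  have A: "1 \<le> A1 \<theta> r (ps \<omega>) (Y \<omega>) \<and> A1 \<theta> r (ps \<omega>) (Y \<omega>) \<le> \<theta>" if "\<omega> \<in> space M" for \<omega>
    using prices[OF that] theta_gt_1 by (cases rule: A1_cases[of \<theta> r "ps \<omega>" "Y \<omega>"]) auto
  have C: "0 \<le> C \<omega> \<and> C \<omega> \<le> \<theta>" if "\<omega> \<in> space M" for \<omega>
    using X[OF that] mult_consist_powr_le[of "X \<omega>" "Y \<omega>" s] assms(10)[OF that] s(1)
    unfolding C_def by auto
  have X_meas: "X \<in> borel_measurable M"
    unfolding X_def set_ps(1) using assms(7) by (intro borel_measurable_Max) auto
  then have "C \<in> borel_measurable M"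
    unfolding C_def consist_def using assms(9) by measurable
  moreover have "(\<lambda>\<omega>. A1 \<theta> r (ps \<omega>) (Y \<omega>)) \<in> borel_measurable M"
    unfolding ps_def using assms(7,9) by (intro borel_measurable_A1) auto
  ultimately have integrable:
    "integrable M X" "integrable M (\<lambda>\<omega>. A1 \<theta> r (ps \<omega>) (Y \<omega>))" "integrable M C"
    using X_meas by (auto intro!: integrable_const_bound[where B = \<theta>] AE_I2 dest: X A C)
  have "1 \<le> (\<integral>\<omega>. X \<omega> \<partial>M)"
    using integral_mono[of M "\<lambda>_. 1" X] X integrable(1) by (simp add: prob_space)
  then have EX_pos: "0 < (\<integral>\<omega>. X \<omega> \<partial>M)" by simp
  have "r * X \<omega> \<le> A1 \<theta> r (ps \<omega>) (Y \<omega>)" if "\<omega> \<in> space M" for \<omega>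
    using r_Max_le_A1 set_ps(2) prices[OF that] assms(10)[OF that] unfolding X_def by auto
  from integral_ratio_mono[OF integrable(1,2) this EX_pos]
  have "r \<le> (\<integral>\<omega>. A1 \<theta> r (ps \<omega>) (Y \<omega>) \<partial>M) / (\<integral>\<omega>. X \<omega> \<partial>M)"
    using EX_pos by simp
  moreover have "1 / (r * \<theta>) * C \<omega> \<le> A1 \<theta> r (ps \<omega>) (Y \<omega>)" if "\<omega> \<in> space M" for \<omega>
  proof -
    have "\<forall>p\<in>set (ps \<omega>). 0 < p \<and> p \<le> \<theta>" using prices[OF that] by fastforce
    then show ?thesis using consistency_bound_le_A1[OF s set_ps(2)] assms(10)[OF that]
      unfolding C_def X_def by simp
  qed
  from integral_ratio_mono[OF integrable(3,2) this EX_pos]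
  have "1 / (r * \<theta>) * ((\<integral>\<omega>. C \<omega> \<partial>M) / (\<integral>\<omega>. X \<omega> \<partial>M))
      \<le> (\<integral>\<omega>. A1 \<theta> r (ps \<omega>) (Y \<omega>) \<partial>M) / (\<integral>\<omega>. X \<omega> \<partial>M)" .
  ultimately show ?thesis unfolding C_def X_def set_ps(1) unfolding ps_def by simp
qed

end
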